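(* Let $K$ be an algebraically closed field of characteristic zero and $e_1\in 3+2\mathbb{N}$. Let $S\subset K^3$ be the surface $x_3^2+(x_1^{e_1}-x_2^2)x_1=0$, $S'\subset K^3$ the surface $\alpha^{2e_1}-4\beta\gamma=0$, $\sigma$ the involution $\sigma(\alpha,\beta,\gamma)=(-\alpha,\gamma,\beta)$ of $S'$, and $F:S'\to S$, $F(\alpha,\beta,\gamma)=(\alpha^2,\beta+\gamma,\alpha(\beta-\gamma))$. Then $F$ is the quotient map of the $\mathbb{Z}/2\mathbb{Z}$-action on $S'$ generated by $\sigma$; in particular $S=S'/\!/(\mathbb{Z}/2\mathbb{Z})$, i.e. via $F$ the ring $\mathcal{O}(S)$ is the ring of $\sigma^*$-invariants of $\mathcal{O}(S')$.
   Context: $\sigma^*(f)=f\circ\sigma$. *)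

theory Defs
  imports "HOL-Computational_Algebra.Polynomial"
begin

definition alg_closed :: "('a::field) itself \<Rightarrow> bool" where
  "alg_closed _ \<longleftrightarrow> (\<forall>p::'a poly. degree p > 0 \<longrightarrow> (\<exists>x. poly p x = 0))"

inductive_set polyfun3 :: "('a::comm_ring_1 \<times> 'a \<times> 'a \<Rightarrow> 'a) set" where
  const: "(\<lambda>_. c) \<in> polyfun3"
| x1: "(\<lambda>(a,b,c). a) \<in> polyfun3"
| x2: "(\<lambda>(a,b,c). b) \<in> polyfun3"
| x3: "(\<lambda>(a,b,c). c) \<in> polyfun3"
| add: "f \<in> polyfun3 \<Longrightarrow> g \<in> polyfun3 \<Longrightarrow> (\<lambda>x. f x + g x) \<in> polyfun3"
| mult: "f \<in> polyfun3 \<Longrightarrow> g \<in> polyfun3 \<Longrightarrow> (\<lambda>x. f x * g x) \<in> polyfun3"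

definition surfS :: "nat \<Rightarrow> ('a::comm_ring_1 \<times> 'a \<times> 'a) set" where
  "surfS e = {(x1,x2,x3). x3^2 + (x1^e - x2^2) * x1 = 0}"

definition surfS' :: "nat \<Rightarrow> ('a::comm_ring_1 \<times> 'a \<times> 'a) set" where
  "surfS' e = {(a,b,c). a^(2*e) - 4*b*c = 0}"

definition invol :: "'a::comm_ring_1 \<times> 'a \<times> 'a \<Rightarrow> 'a \<times> 'a \<times> 'a" where
  "invol = (\<lambda>(a,b,c). (-a, c, b))"

definition mapF :: "'a::comm_ring_1 \<times> 'a \<times> 'a \<Rightarrow> 'a \<times> 'a \<times> 'a" where
  "mapF = (\<lambda>(a,b,c). (a^2, b + c, a * (b - c)))"

end

theory Submission
  imports Defs
begin

text \<open>
  On \<open>S'\<close> every polynomial function decomposes as \<open>g = p\<^sub>0 \<circ> F + \<alpha> (p\<^sub>1 \<circ> F) + (\<beta> - \<gamma>) (p\<^sub>2 \<circ> F)\<close>: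
  the coordinates do, since \<open>\<beta> = ((\<beta> + \<gamma>) + (\<beta> - \<gamma>)) / 2\<close>, and such decompositions are closed
  under products because \<open>\<alpha>\<^sup>2\<close>, \<open>\<alpha> (\<beta> - \<gamma>)\<close> and, by the equation of \<open>S'\<close>,
  \<open>(\<beta> - \<gamma>)\<^sup>2 = (\<beta> + \<gamma>)\<^sup>2 - (\<alpha>\<^sup>2)\<^sup>e\<close> are pullbacks along \<open>F\<close>.
  The involution \<open>\<sigma>\<close> fixes \<open>F\<close> and negates \<open>\<alpha>\<close> and \<open>\<beta> - \<gamma>\<close>, so a \<open>\<sigma>\<close>-invariant \<open>g\<close>
  equals its even part \<open>p\<^sub>0 \<circ> F\<close>. Finally \<open>F\<close> maps \<open>S'\<close> onto \<open>S\<close>: over \<open>(x\<^sub>1, x\<^sub>2, x\<^sub>3)\<close>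
  take \<open>\<alpha> = \<surd>x\<^sub>1\<close> and solve \<open>\<beta> + \<gamma> = x\<^sub>2\<close>, \<open>\<alpha> (\<beta> - \<gamma>) = x\<^sub>3\<close>.
\<close>

lemma polyfun3_fst: "fst \<in> polyfun3"
  using polyfun3.x1 unfolding case_prod_unfold by simp

lemma polyfun3_fst_snd: "(\<lambda>y. fst (snd y)) \<in> polyfun3"
  using polyfun3.x2 unfolding case_prod_unfold by simp

lemma polyfun3_snd_snd: "(\<lambda>y. snd (snd y)) \<in> polyfun3"
  using polyfun3.x3 unfolding case_prod_unfold by simp

lemma polyfun3_power: "f \<in> polyfun3 \<Longrightarrow> (\<lambda>x. f x ^ n) \<in> polyfun3"
  by (induction n) (auto intro: polyfun3.intros polyfun3.const[of 1])

lemma polyfun3_diff: "f \<in> polyfun3 \<Longrightarrow> g \<in> polyfun3 \<Longrightarrow> (\<lambda>x. f x - g x) \<in> polyfun3"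
  using polyfun3.add[of f "\<lambda>x. -1 * g x"] polyfun3.mult[OF polyfun3.const[of "-1"], of g] by simp

lemmas polyfun3_intros = polyfun3.intros polyfun3_diff polyfun3_power
  polyfun3_fst polyfun3_fst_snd polyfun3_snd_snd

lemma invol_invol [simp]: "invol (invol x) = x"
  by (auto simp: invol_def split: prod.splits)

lemma mapF_invol [simp]: "mapF (invol x) = mapF x"
  by (auto simp: invol_def mapF_def algebra_simps split: prod.splits)

lemma invol_surfS': "x \<in> surfS' e \<Longrightarrow> invol x \<in> surfS' e"
  by (auto simp: invol_def surfS'_def power_mult)

lemma surfS'_diff_square:
  assumes "(a, b, c) \<in> surfS' e"
  shows "(b - c)^2 = (b + c)^2 - (a^2)^e"
  using assms by (simp add: surfS'_def power_mult power2_eq_square algebra_simps)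

lemma mult_reduce_square:
  fixes a d D P0 P1 P2 Q0 Q1 Q2 :: "'a::comm_ring_1"
  assumes "d^2 = D"
  shows "(P0 + a*P1 + d*P2) * (Q0 + a*Q1 + d*Q2) =
    (P0*Q0 + a^2*(P1*Q1) + D*(P2*Q2) + (a*d)*(P1*Q2 + P2*Q1)) + a*(P0*Q1 + P1*Q0) + d*(P0*Q2 + P2*Q0)"
  using assms by (simp add: algebra_simps power2_eq_square)

definition mapF_decomposable :: "nat \<Rightarrow> ('a::comm_ring_1 \<times> 'a \<times> 'a \<Rightarrow> 'a) \<Rightarrow> bool" where
  "mapF_decomposable e g \<longleftrightarrow> (\<exists>p0\<in>polyfun3. \<exists>p1\<in>polyfun3. \<exists>p2\<in>polyfun3.
     \<forall>a b c. (a, b, c) \<in> surfS' e \<longrightarrow>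
       g (a, b, c) = p0 (mapF (a, b, c)) + a * p1 (mapF (a, b, c)) + (b - c) * p2 (mapF (a, b, c)))"

lemma mapF_decomposableI:
  assumes "p0 \<in> polyfun3" "p1 \<in> polyfun3" "p2 \<in> polyfun3"
    and "\<And>a b c. (a, b, c) \<in> surfS' e \<Longrightarrow>
       g (a, b, c) = p0 (mapF (a, b, c)) + a * p1 (mapF (a, b, c)) + (b - c) * p2 (mapF (a, b, c))"
  shows "mapF_decomposable e g"
  using assms unfolding mapF_decomposable_def by blast

lemma mapF_decomposable_add:
  assumes "mapF_decomposable e f" "mapF_decomposable e g"
  shows "mapF_decomposable e (\<lambda>x. f x + g x)"
proof -
  from assms obtain p0 p1 p2 q0 q1 q2 where
    p: "p0 \<in> polyfun3" "p1 \<in> polyfun3" "p2 \<in> polyfun3"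
      "\<And>a b c. (a, b, c) \<in> surfS' e \<Longrightarrow>
       f (a, b, c) = p0 (mapF (a, b, c)) + a * p1 (mapF (a, b, c)) + (b - c) * p2 (mapF (a, b, c))"
    and q: "q0 \<in> polyfun3" "q1 \<in> polyfun3" "q2 \<in> polyfun3"
      "\<And>a b c. (a, b, c) \<in> surfS' e \<Longrightarrow>
       g (a, b, c) = q0 (mapF (a, b, c)) + a * q1 (mapF (a, b, c)) + (b - c) * q2 (mapF (a, b, c))"
    unfolding mapF_decomposable_def by metis
  show ?thesis
    by (rule mapF_decomposableI[of "\<lambda>y. p0 y + q0 y" "\<lambda>y. p1 y + q1 y" "\<lambda>y. p2 y + q2 y"])
       (use p q in \<open>auto intro: polyfun3_intros simp: algebra_simps\<close>)
qed

lemma mapF_decomposable_mult: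
  assumes "mapF_decomposable e f" "mapF_decomposable e g"
  shows "mapF_decomposable e (\<lambda>x. f x * g x)"
proof -
  from assms obtain p0 p1 p2 q0 q1 q2 where
    p: "p0 \<in> polyfun3" "p1 \<in> polyfun3" "p2 \<in> polyfun3"
      "\<And>a b c. (a, b, c) \<in> surfS' e \<Longrightarrow>
       f (a, b, c) = p0 (mapF (a, b, c)) + a * p1 (mapF (a, b, c)) + (b - c) * p2 (mapF (a, b, c))"
    and q: "q0 \<in> polyfun3" "q1 \<in> polyfun3" "q2 \<in> polyfun3"
      "\<And>a b c. (a, b, c) \<in> surfS' e \<Longrightarrow>
       g (a, b, c) = q0 (mapF (a, b, c)) + a * q1 (mapF (a, b, c)) + (b - c) * q2 (mapF (a, b, c))"
    unfolding mapF_decomposable_def by metis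
  define r0 where "r0 y = p0 y * q0 y + fst y * (p1 y * q1 y)
    + ((fst (snd y))^2 - fst y ^ e) * (p2 y * q2 y) + snd (snd y) * (p1 y * q2 y + p2 y * q1 y)" for y
  show ?thesis
  proof (rule mapF_decomposableI[of r0 "\<lambda>y. p0 y * q1 y + p1 y * q0 y" "\<lambda>y. p0 y * q2 y + p2 y * q0 y"])
    show "r0 \<in> polyfun3"
      unfolding r0_def[abs_def] using p q by (intro polyfun3_intros)
    show "(\<lambda>y. p0 y * q1 y + p1 y * q0 y) \<in> polyfun3"
      using p q by (intro polyfun3_intros)
    show "(\<lambda>y. p0 y * q2 y + p2 y * q0 y) \<in> polyfun3"
      using p q by (intro polyfun3_intros)
  next
    fix a b c :: 'a assume S: "(a, b, c) \<in> surfS' e"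
    let ?m = "mapF (a, b, c)"
    have m: "fst ?m = a^2" "fst (snd ?m) = b + c" "snd (snd ?m) = a * (b - c)"
      by (simp_all add: mapF_def)
    have d: "(b - c)^2 = (fst (snd ?m))^2 - fst ?m ^ e"
      using surfS'_diff_square[OF S] by (simp only: m)
    have "f (a, b, c) * g (a, b, c)
        = (p0 ?m + a * p1 ?m + (b - c) * p2 ?m) * (q0 ?m + a * q1 ?m + (b - c) * q2 ?m)"
      using p(4)[OF S] q(4)[OF S] by simp
    also have "\<dots> = r0 ?m + a * (p0 ?m * q1 ?m + p1 ?m * q0 ?m) + (b - c) * (p0 ?m * q2 ?m + p2 ?m * q0 ?m)"
      unfolding mult_reduce_square[OF d] by (simp only: r0_def m mult.assoc)
    finally show "f (a, b, c) * g (a, b, c)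
        = r0 ?m + a * (p0 ?m * q1 ?m + p1 ?m * q0 ?m) + (b - c) * (p0 ?m * q2 ?m + p2 ?m * q0 ?m)" .
  qed
qed

lemma polyfun3_mapF_decomposable:
  fixes g :: "'a::field \<times> 'a \<times> 'a \<Rightarrow> 'a"
  assumes "(2::'a) \<noteq> 0" and "g \<in> polyfun3"
  shows "mapF_decomposable e g"
proof -
  have "(4::'a) \<noteq> 0"
    using assms(1) mult_eq_0_iff[of "2::'a" 2] by simp
  have half: "(\<lambda>y. 1 / 2 * fst (snd y)) \<in> polyfun3"
    by (rule polyfun3.mult[OF polyfun3.const polyfun3_fst_snd])
  from assms(2) show ?thesis
  proof (induction g rule: polyfun3.induct)
    case (const c)
    show ?case
      by (rule mapF_decomposableI[of "\<lambda>_. c" "\<lambda>_. 0" "\<lambda>_. 0"]) (auto intro: polyfun3_intros)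
  next
    case x1
    show ?case
      by (rule mapF_decomposableI[of "\<lambda>_. 0" "\<lambda>_. 1" "\<lambda>_. 0"]) (auto intro: polyfun3_intros)
  next
    case x2
    show ?case
      by (rule mapF_decomposableI[OF half, of "\<lambda>_. 0" "\<lambda>_. 1 / 2"])
         (use assms(1) \<open>4 \<noteq> 0\<close> in \<open>auto intro: polyfun3.const simp: mapF_def field_simps\<close>)
  next
    case x3
    show ?case
      by (rule mapF_decomposableI[OF half, of "\<lambda>_. 0" "\<lambda>_. - 1 / 2"])
         (use assms(1) \<open>4 \<noteq> 0\<close> in \<open>auto intro: polyfun3.const simp: mapF_def field_simps\<close>)
  qed (use mapF_decomposable_add mapF_decomposable_mult in blast)+
qed

lemma invol_invariant_factors_through_mapF:
  fixes g :: "'a::field \<times> 'a \<times> 'a \<Rightarrow> 'a"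
  assumes "(2::'a) \<noteq> 0" and "g \<in> polyfun3" and invariant: "\<forall>x\<in>surfS' e. g (invol x) = g x"
  shows "\<exists>p\<in>polyfun3. \<forall>x\<in>surfS' e. g x = p (mapF x)"
proof -
  obtain p0 p1 p2 where "p0 \<in> polyfun3" and decomp: "\<And>a b c. (a, b, c) \<in> surfS' e \<Longrightarrow>
       g (a, b, c) = p0 (mapF (a, b, c)) + a * p1 (mapF (a, b, c)) + (b - c) * p2 (mapF (a, b, c))"
    using polyfun3_mapF_decomposable[OF assms(1,2)] unfolding mapF_decomposable_def by metis
  have "g x = p0 (mapF x)" if "x \<in> surfS' e" for x
  proof -
    obtain a b c where x: "x = (a, b, c)"
      by (cases x)
    let ?m = "mapF (a, b, c)"
    let ?odd = "a * p1 ?m + (b - c) * p2 ?m"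
    have S: "(a, b, c) \<in> surfS' e" and S': "(-a, c, b) \<in> surfS' e"
      using that invol_surfS'[OF that] by (simp_all add: x invol_def)
    have "mapF (-a, c, b) = ?m"
      by (simp add: mapF_def algebra_simps)
    have "g (a, b, c) = g (-a, c, b)"
      using invariant[rule_format, OF S] by (simp add: invol_def)
    also have "\<dots> = p0 ?m + (-a) * p1 ?m + (c - b) * p2 ?m"
      using decomp[OF S'] \<open>mapF (-a, c, b) = ?m\<close> by simp
    also have "\<dots> = p0 ?m - ?odd"
      by (simp add: algebra_simps)
    finally have minus: "g (a, b, c) = p0 ?m - ?odd" .
    have plus: "g (a, b, c) = p0 ?m + ?odd"
      using decomp[OF S] by (simp add: add.assoc)
    have "g (a, b, c) + g (a, b, c) = (p0 ?m + ?odd) + (p0 ?m - ?odd)"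
      using arg_cong2[where f = "(+)", OF plus minus] .
    also have "\<dots> = p0 ?m + p0 ?m"
      by simp
    finally have "2 * g (a, b, c) = 2 * p0 ?m"
      by (simp only: mult_2)
    with assms(1) show ?thesis
      by (simp add: x)
  qed
  with \<open>p0 \<in> polyfun3\<close> show ?thesis
    by blast
qed

lemma alg_closed_square_root:
  assumes "alg_closed TYPE('a::field)"
  shows "\<exists>r::'a. r^2 = x"
proof -
  have "degree [:-x, 0, 1:] > 0"
    by simp
  then obtain r where "poly [:-x, 0, 1:] r = 0"
    using assms unfolding alg_closed_def by blast
  then show ?thesis
    by (auto simp: power2_eq_square)
qed

lemma mapF_image_surfS'_subset: "mapF ` surfS' e \<subseteq> surfS e"
proof
  fix y assume "y \<in> mapF ` surfS' e"
  then obtain a b c where S: "(a, b, c) \<in> surfS' e" and y: "y = mapF (a, b, c)"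
    by auto
  have "(a * (b - c))^2 = a^2 * ((b + c)^2 - (a^2)^e)"
    by (simp add: power_mult_distrib surfS'_diff_square[OF S])
  then have "(a * (b - c))^2 + ((a^2)^e - (b + c)^2) * a^2 = 0"
    by (simp add: algebra_simps)
  then show "y \<in> surfS e"
    by (simp add: y surfS_def mapF_def)
qed

lemma surfS_subset_mapF_image:
  assumes "alg_closed TYPE('a::field)" and "(2::'a) \<noteq> 0" and "e > 0"
  shows "surfS e \<subseteq> mapF ` (surfS' e :: ('a \<times> 'a \<times> 'a) set)"
proof
  fix y :: "'a \<times> 'a \<times> 'a" assume "y \<in> surfS e"
  then obtain x1 x2 x3 where y: "y = (x1, x2, x3)" and eq: "x3^2 + (x1^e - x2^2) * x1 = 0"
    by (auto simp: surfS_def)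
  obtain r where r: "r^2 = x1"
    using alg_closed_square_root[OF assms(1)] by blast
  show "y \<in> mapF ` surfS' e"
  proof (cases "r = 0")
    case True
    with r eq assms(3) have "y = mapF (0, x2, 0)" and "(0, x2, 0) \<in> surfS' e"
      by (simp_all add: y mapF_def surfS'_def)
    then show ?thesis
      by (rule image_eqI)
  next
    case False
    define b where "b = (x2 + x3 / r) / 2"
    define c where "c = (x2 - x3 / r) / 2"
    have bc: "b + c = x2" "b - c = x3 / r"
      using assms(2) unfolding b_def c_def add_divide_distrib[symmetric] diff_divide_distrib[symmetric]
      by (simp_all flip: mult_2)
    have "x1 \<noteq> 0"
      using r False by auto
    have "4 * b * c = (b + c)^2 - (b - c)^2"
      by (simp add: algebra_simps power2_eq_square)
    also have "\<dots> = x2^2 - (x3 / r)^2"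
      by (simp only: bc)
    also have "(x3 / r)^2 = x2^2 - x1^e"
    proof -
      have "x3^2 = x1 * (x2^2 - x1^e)"
        using eq by (simp add: algebra_simps add_eq_0_iff2)
      then show ?thesis
        using \<open>x1 \<noteq> 0\<close> by (simp add: power_divide r)
    qed
    finally have "(r, b, c) \<in> surfS' e"
      by (simp add: surfS'_def power_mult r)
    moreover have "y = mapF (r, b, c)"
      using False by (simp add: y mapF_def bc r)
    ultimately show ?thesis
      by (intro image_eqI)
  qed
qed

theorem lemma10:
  fixes e1 :: nat
  assumes "alg_closed TYPE('a::field_char_0)"
    and "\<exists>k. e1 = 3 + 2 * k"
  shows "invol ` (surfS' e1 :: ('a \<times> 'a \<times> 'a) set) \<subseteq> surfS' e1
    \<and> (\<forall>x \<in> (surfS' e1 :: ('a \<times> 'a \<times> 'a) set). invol (invol x) = x)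
    \<and> mapF ` (surfS' e1 :: ('a \<times> 'a \<times> 'a) set) = surfS e1
    \<and> (\<forall>x \<in> (surfS' e1 :: ('a \<times> 'a \<times> 'a) set). mapF (invol x) = mapF x)
    \<and> (\<forall>p \<in> (polyfun3 :: ('a \<times> 'a \<times> 'a \<Rightarrow> 'a) set). \<forall>q \<in> polyfun3.
          (\<forall>x \<in> surfS' e1. p (mapF x) = q (mapF x)) \<longrightarrow> (\<forall>y \<in> surfS e1. p y = q y))
    \<and> (\<forall>g \<in> (polyfun3 :: ('a \<times> 'a \<times> 'a \<Rightarrow> 'a) set).
          (\<forall>x \<in> surfS' e1. g (invol x) = g x) \<longrightarrow>
          (\<exists>p \<in> polyfun3. \<forall>x \<in> surfS' e1. g x = p (mapF x)))"
proof (intro conjI ballI impI)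
  have "e1 > 0"
    using assms(2) by auto
  then have "surfS e1 \<subseteq> mapF ` (surfS' e1 :: ('a \<times> 'a \<times> 'a) set)"
    by (intro surfS_subset_mapF_image assms(1)) simp_all
  with mapF_image_surfS'_subset
  show image: "mapF ` (surfS' e1 :: ('a \<times> 'a \<times> 'a) set) = surfS e1"
    by (rule subset_antisym)
  fix p q :: "'a \<times> 'a \<times> 'a \<Rightarrow> 'a" and y :: "'a \<times> 'a \<times> 'a"
  assume pq: "\<forall>x \<in> surfS' e1. p (mapF x) = q (mapF x)" and "y \<in> surfS e1"
  then have "y \<in> mapF ` surfS' e1"
    by (simp only: image)
  then obtain x where "x \<in> surfS' e1" and "y = mapF x"
    by (rule imageE)
  with pq show "p y = q y"
    by simp
next
  fix g :: "'a \<times> 'a \<times> 'a \<Rightarrow> 'a"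
  assume "g \<in> polyfun3" and "\<forall>x \<in> surfS' e1. g (invol x) = g x"
  then show "\<exists>p \<in> polyfun3. \<forall>x \<in> surfS' e1. g x = p (mapF x)"
    by (intro invol_invariant_factors_through_mapF) simp_all
qed (simp_all add: image_subset_iff invol_surfS')

end
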